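(* Let $n\ge1$ and let $U\subseteq\mathbb{R}^{1\times n}$ be a non-empty open set. For every sequence of nowhere constant continuous functions $f_k:U\to\mathbb{R}^{1\times n}$, $k\ge1$, the set $$\bigcap_{k\ge1}f_k^{-1}(\mathscr{L}^{*}_{1,n})\cap\mathscr{L}_{1,n}$$ is a dense $G_\delta$ subset of $U$. In particular there is a dense $G_\delta$ set $\Lambda\subseteq\mathscr{L}_{1,n}\cap U$ (dense in $U$) with $f_k(A)\in\mathscr{L}^*_{1,n}$ for all $A\in\Lambda$ and all $k\ge1$.
   Context: $\Vert\cdot\Vert$ is the supremum norm; a real $m\times n$ matrix $A$ is a Liouville matrix if $A\mathbf{q}-\mathbf{p}\neq\mathbf{0}$ for all nonzero $(\mathbf{q},\mathbf{p})\in\mathbb{Z}^n\times\mathbb{Z}^m$ and for every $N$ there exist $\mathbf{p}\in\mathbb{Z}^m$, $\mathbf{q}\in\mathbb{Z}^n\setminus\{\mathbf{0}\}$ with $\Vert A\mathbf{q}-\mathbf{p}\Vert<\Vert\mathbf{q}\Vert^{-N}$; $\mathscr{L}_{m,n}$ is the set of these. $\mathscr{L}^*_{m,n}$ is the set of $A\in\mathbb{R}^{m\times n}\setminus\mathbb{Q}^{m\times n}$ such that for every $N$ there exist $\mathbf{p}\in\mathbb{Z}^m$, $\mathbf{q}\in\mathbb{Z}^n\setminus\{\mathbf{0}\}$ with $\Vert A\mathbf{q}-\mathbf{p}\Vert<\Vert\mathbf{q}\Vert^{-N}$. A function on an open set $U$ is nowhere constant if it is not constant on any non-empty open subset of $U$.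 $\mathbb{R}^{1\times n}\cong\mathbb{R}^n$. *)

theory Defs
  imports "HOL-Analysis.Analysis"
begin

text \<open>A real 1 x n matrix is identified with a vector in real^'n; A q is the inner product.
  The supremum norm is the library's infnorm.\<close>

definition int_vec :: "real^'n \<Rightarrow> bool" where
  "int_vec q \<longleftrightarrow> (\<forall>i. q $ i \<in> \<int>)"

definition rat_vec :: "real^'n \<Rightarrow> bool" where
  "rat_vec A \<longleftrightarrow> (\<forall>i. A $ i \<in> \<rat>)"

definition liouville_approx :: "real^'n \<Rightarrow> bool" where
  "liouville_approx A \<longleftrightarrow>
     (\<forall>N::nat. \<exists>p::real. \<exists>q::real^'n. p \<in> \<int> \<and> int_vec q \<and> q \<noteq> 0 \<and>
        \<bar>A \<bullet> q - p\<bar> < inverse (infnorm q ^ N))"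

definition Liouville :: "(real^'n) set" where
  "Liouville = {A. (\<forall>q p. int_vec q \<and> p \<in> \<int> \<and> (q, p) \<noteq> (0, 0) \<longrightarrow> A \<bullet> q - p \<noteq> 0)
                   \<and> liouville_approx A}"

definition Liouville_star :: "(real^'n) set" where
  "Liouville_star = {A. \<not> rat_vec A \<and> liouville_approx A}"

definition nowhere_constant_on :: "('a::topological_space \<Rightarrow> 'b) \<Rightarrow> 'a set \<Rightarrow> bool" where
  "nowhere_constant_on f U \<longleftrightarrow>
     (\<forall>V. open V \<and> V \<subseteq> U \<and> V \<noteq> {} \<longrightarrow> \<not> (\<exists>c. \<forall>x\<in>V. f x = c))"

end

theory Submission
  imports Defs
begin

text \<open>The set is the intersection of \<open>U\<close> with countably many open sets, each dense in \<open>U\<close>,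
  so Baire's theorem in the locally compact space \<open>U\<close> applies. The relation \<open>A q \<noteq> p\<close> fails
  only on a hyperplane. Having an approximation of quality \<open>N\<close> is an open condition satisfied by
  every vector with a rational coordinate, since such a vector admits an exact relation \<open>A q = p\<close>.
  A continuous nowhere constant \<open>f\<^sub>k\<close> varies in some coordinate on every ball, so by the
  intermediate value theorem it takes a value with a rational coordinate there; and it avoids any
  given rational vector on a dense open set.\<close>

lemma countable_vectors_with_components_in:
  assumes "countable C"
  shows "countable {x::'a^'n. \<forall>i. x $ i \<in> C}"
proof -
  have "x \<in> vec_lambda ` (Pi\<^sub>E UNIV (\<lambda>_. C))" if "\<forall>i. x $ i \<in> C" for x :: "'a^'n"
    using that by (intro image_eqI[of _ _ "vec_nth x"]) auto
  then have "{x::'a^'n. \<forall>i. x $ i \<in> C} \<subseteq> vec_lambda ` (Pi\<^sub>E UNIV (\<lambda>_. C))"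
    by blast
  then show ?thesis
    using assms by (meson countable_PiE countable_image countable_subset finite)
qed

lemma closure_hyperplane_complement:
  fixes q :: "'a::euclidean_space"
  assumes "q \<noteq> 0"
  shows "closure {x. x \<bullet> q \<noteq> p} = UNIV"
proof -
  have "- {x. x \<bullet> q \<noteq> p} = {x. q \<bullet> x = p}"
    by (auto simp: inner_commute)
  then show ?thesis
    using assms by (simp add: closure_interior)
qed

lemma Baire_open_subset:
  fixes U :: "'a::heine_borel set"
  assumes "open U" "countable \<G>" "\<And>T. T \<in> \<G> \<Longrightarrow> open T" "\<And>T. T \<in> \<G> \<Longrightarrow> U \<subseteq> closure T"
  shows "gdelta_in (top_of_set U) (U \<inter> \<Inter>\<G>) \<and> U \<subseteq> closure (U \<inter> \<Inter>\<G>)"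
proof -
  define \<H> where "\<H> = insert U ((\<lambda>T. U \<inter> T) ` \<G>)"
  have "U \<inter> \<Inter>\<G> = \<Inter>\<H>"
    unfolding \<H>_def by blast
  have open_H: "openin (top_of_set U) H" if "H \<in> \<H>" for H
    using that assms(1,3) unfolding \<H>_def by auto
  have "countable \<H>"
    using assms(2) unfolding \<H>_def by simp
  have "U \<subseteq> closure H" if "H \<in> \<H>" for H
    using that assms(1,3,4) open_Int_closure_subset[OF assms(1)] closure_subset
    unfolding \<H>_def by blast
  then have "top_of_set U closure_of H = U" if "H \<in> \<H>" for H
    using that by (simp add: closure_of_subtopology_open assms(1) Int_absorb2)
  moreover have "locally_compact_space (top_of_set U) \<and> regular_space (top_of_set U)"
    by (simp add: assms(1) locally_compact_space_open_subset regular_space_subtopology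
        regular_space_euclidean locally_compact_space_euclidean)
  ultimately have "top_of_set U closure_of \<Inter>\<H> = U"
    using Baire_category[of "top_of_set U" \<H>] open_H \<open>countable \<H>\<close> by auto
  moreover have "gdelta_in (top_of_set U) (\<Inter>\<H>)"
    using \<open>countable \<H>\<close> open_H by (intro gdelta_in_Inter open_imp_gdelta_in) (auto simp: \<H>_def)
  moreover have "\<Inter>\<H> \<subseteq> U"
    unfolding \<H>_def by blast
  ultimately show ?thesis
    unfolding \<open>U \<inter> \<Inter>\<G> = \<Inter>\<H>\<close> by (auto simp: closure_of_subtopology Int_absorb1)
qed

lemma connected_continuous_image_contains_rational:
  fixes h :: "'a::topological_space \<Rightarrow> real"
  assumes "connected S" "continuous_on S h" "x \<in> S" "y \<in> S" "h x < h y"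
  obtains z where "z \<in> S" "h z \<in> \<rat>"
proof -
  obtain r where r: "r \<in> \<rat>" "h x < r" "r < h y"
    using Rats_dense_in_real assms(5) by blast
  have "is_interval (h ` S)"
    using assms by (simp add: is_interval_connected_1 connected_continuous_image)
  then have "r \<in> h ` S"
    by (rule mem_is_interval_1_I[where a = "h x" and b = r and c = "h y"]) (use r assms(3,4) in auto)
  then show ?thesis
    using r that by blast
qed

lemma nowhere_constant_on_id: "nowhere_constant_on (\<lambda>x::'a::perfect_space. x) U"
  unfolding nowhere_constant_on_def
  by (metis not_open_singleton subset_singleton_iff subsetI singletonI)

lemma nowhere_constant_on_dense_not_equal:
  assumes "open U" "nowhere_constant_on g U"
  shows "U \<subseteq> closure (g -` (- {a}) \<inter> U)"
proof
  fix x assume "x \<in> U"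
  show "x \<in> closure (g -` (- {a}) \<inter> U)"
  proof (clarsimp simp: closure_iff_nhds_not_empty)
    fix T S assume "S \<subseteq> T" "open S" "x \<in> S" and disj: "g -` (- {a}) \<inter> U \<inter> T = {}"
    have "open (S \<inter> U)" "S \<inter> U \<subseteq> U" "S \<inter> U \<noteq> {}"
      using \<open>open S\<close> \<open>open U\<close> \<open>x \<in> S\<close> \<open>x \<in> U\<close> by auto
    moreover have "\<forall>y \<in> S \<inter> U. g y = a"
      using disj \<open>S \<subseteq> T\<close> by blast
    ultimately show False
      using assms(2) unfolding nowhere_constant_on_def by blast
  qed
qed

lemma nowhere_constant_on_dense_rational_component:
  fixes g :: "'a::real_normed_vector \<Rightarrow> real^'m"
  assumes "open U" "continuous_on U g" "nowhere_constant_on g U"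
  shows "U \<subseteq> closure {x \<in> U. \<exists>i. g x $ i \<in> \<rat>}"
proof
  fix x assume "x \<in> U"
  show "x \<in> closure {x \<in> U. \<exists>i. g x $ i \<in> \<rat>}"
  proof (clarsimp simp: closure_iff_nhds_not_empty)
    fix T S assume "S \<subseteq> T" "open S" "x \<in> S" and disj: "{x \<in> U. \<exists>i. g x $ i \<in> \<rat>} \<inter> T = {}"
    obtain d where "d > 0" and ball: "ball x d \<subseteq> S \<inter> U"
      using \<open>open S\<close> \<open>open U\<close> \<open>x \<in> S\<close> \<open>x \<in> U\<close> by (meson open_Int open_contains_ball IntI)
    then have "\<not> (\<forall>y \<in> ball x d. g y = g x)"
      using assms(3) unfolding nowhere_constant_on_def by (metis open_ball ball_eq_empty not_le le_inf_iff)
    then obtain y i where y: "y \<in> ball x d" "g y $ i \<noteq> g x $ i"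
      by (auto simp: vec_eq_iff)
    have cont: "continuous_on (ball x d) (\<lambda>w. g w $ i)"
      using ball by (intro continuous_intros continuous_on_subset[OF assms(2)]) auto
    have "x \<in> ball x d"
      using \<open>d > 0\<close> by simp
    then obtain z where "z \<in> ball x d" "g z $ i \<in> \<rat>"
      using y connected_continuous_image_contains_rational[OF connected_ball cont]
      by (metis linorder_neqE_linordered_idom)
    then show False
      using disj ball \<open>S \<subseteq> T\<close> by blast
  qed
qed

definition liouville_approx_set :: "nat \<Rightarrow> (real^'n) set" where
  "liouville_approx_set N = {A. \<exists>p q. p \<in> \<int> \<and> int_vec q \<and> q \<noteq> 0 \<and>
     \<bar>A \<bullet> q - p\<bar> < inverse (infnorm q ^ N)}"

lemma liouville_approx_iff: "liouville_approx A \<longleftrightarrow> (\<forall>N. A \<in> liouville_approx_set N)"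
  unfolding liouville_approx_def liouville_approx_set_def by blast

lemma open_liouville_approx_set: "open (liouville_approx_set N)"
proof -
  have eq: "liouville_approx_set N =
      (\<Union>q \<in> {q. int_vec q \<and> q \<noteq> 0}. \<Union>p \<in> \<int>. {A. \<bar>A \<bullet> q - p\<bar> < inverse (infnorm q ^ N)})"
    unfolding liouville_approx_set_def by blast
  show ?thesis
    unfolding eq by (intro open_UN ballI open_Collect_less continuous_intros)
qed

lemma liouville_approx_set_if_rational_component:
  fixes A :: "real^'n"
  assumes "A $ i \<in> \<rat>"
  shows "A \<in> liouville_approx_set N"
proof -
  obtain a b where ab: "A $ i = of_int a / of_int b" "b > 0"
    using assms by (metis Rats_cases')
  define q :: "real^'n" where "q = (\<chi> j. if j = i then of_int b else 0)"
  have "A \<bullet> q = of_int a"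
    using ab by (simp add: q_def inner_vec_def if_distrib cong: if_cong)
  moreover have "int_vec q" "q \<noteq> 0"
    using ab by (auto simp: int_vec_def q_def vec_eq_iff intro!: exI[of _ i])
  moreover have "infnorm q > 0"
    using \<open>q \<noteq> 0\<close> by (simp add: infnorm_pos_lt)
  ultimately show ?thesis
    unfolding liouville_approx_set_def by (intro CollectI exI[of _ "of_int a"] exI[of _ q]) auto
qed

lemma closure_liouville_approx_set: "closure (liouville_approx_set N) = UNIV"
proof -
  have "UNIV \<subseteq> closure {x::real^'n \<in> UNIV. \<exists>i. x $ i \<in> \<rat>}"
    using nowhere_constant_on_dense_rational_component[of UNIV "\<lambda>x. x"]
    by (simp add: nowhere_constant_on_id)
  also have "\<dots> \<subseteq> closure (liouville_approx_set N)"
    using liouville_approx_set_if_rational_component by (intro closure_mono) blast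
  finally show ?thesis
    by blast
qed

lemma nowhere_constant_on_dense_preimage_liouville_approx_set:
  fixes g :: "'a::real_normed_vector \<Rightarrow> real^'m"
  assumes "open U" "continuous_on U g" "nowhere_constant_on g U"
  shows "U \<subseteq> closure (g -` liouville_approx_set N \<inter> U)"
proof -
  have "{x \<in> U. \<exists>i. g x $ i \<in> \<rat>} \<subseteq> g -` liouville_approx_set N \<inter> U"
    using liouville_approx_set_if_rational_component by blast
  then show ?thesis
    using nowhere_constant_on_dense_rational_component[OF assms] closure_mono by blast
qed

definition Liouville_conditions :: "(real^'n) set set" where
  "Liouville_conditions =
     (\<Union>q \<in> {q. int_vec q \<and> q \<noteq> 0}. \<Union>p \<in> \<int>. {{A. A \<bullet> q \<noteq> p}}) \<union> range liouville_approx_set"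

definition Liouville_star_conditions :: "(real^'n) set set" where
  "Liouville_star_conditions = (\<lambda>a. - {a}) ` {a. rat_vec a} \<union> range liouville_approx_set"

lemma Liouville_eq_Inter_conditions: "Liouville = \<Inter>Liouville_conditions"
proof (intro set_eqI)
  fix A :: "real^'n"
  have "(\<forall>q p. int_vec q \<and> p \<in> \<int> \<and> (q, p) \<noteq> (0, 0) \<longrightarrow> A \<bullet> q - p \<noteq> 0) \<longleftrightarrow>
        (\<forall>q p. int_vec q \<and> q \<noteq> 0 \<and> p \<in> \<int> \<longrightarrow> A \<bullet> q \<noteq> p)"
    by (metis Pair_inject diff_zero eq_iff_diff_eq_0 inner_zero_right)
  then show "A \<in> Liouville \<longleftrightarrow> A \<in> \<Inter>Liouville_conditions"
    by (simp add: Liouville_def Liouville_conditions_def liouville_approx_iff ball_Un ball_UN) blast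
qed

lemma Liouville_star_eq_Inter_conditions: "Liouville_star = \<Inter>Liouville_star_conditions"
  by (auto simp: Liouville_star_def Liouville_star_conditions_def liouville_approx_iff)

lemma countable_Liouville_conditions: "countable Liouville_conditions"
proof -
  have "countable {q::real^'n. int_vec q \<and> q \<noteq> 0}"
    using countable_vectors_with_components_in[OF countable_int, where 'n='n]
    by (rule countable_subset[rotated]) (auto simp: int_vec_def)
  then show ?thesis
    unfolding Liouville_conditions_def by (auto intro!: countable_UN countable_int)
qed

lemma countable_Liouville_star_conditions: "countable Liouville_star_conditions"
proof -
  have "countable {a::real^'n. rat_vec a}"
    using countable_vectors_with_components_in[OF countable_rat, where 'n='n]
    by (simp add: rat_vec_def)
  then show ?thesis
    unfolding Liouville_star_conditions_def by (intro countable_Un countable_image) auto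
qed

lemma open_dense_Liouville_conditions:
  assumes "T \<in> Liouville_conditions"
  shows "open T \<and> closure T = UNIV"
  using assms
  by (auto simp: Liouville_conditions_def closure_hyperplane_complement open_Collect_neq continuous_intros
      open_liouville_approx_set closure_liouville_approx_set)

lemma open_Liouville_star_conditions: "T \<in> Liouville_star_conditions \<Longrightarrow> open T"
  by (auto simp: Liouville_star_conditions_def open_liouville_approx_set)

lemma nowhere_constant_on_dense_preimage_Liouville_star_conditions:
  fixes g :: "'a::real_normed_vector \<Rightarrow> real^'m"
  assumes "open U" "continuous_on U g" "nowhere_constant_on g U" "T \<in> Liouville_star_conditions"
  shows "U \<subseteq> closure (g -` T \<inter> U)"
  using assms(4) nowhere_constant_on_dense_not_equal[OF assms(1,3)]
    nowhere_constant_on_dense_preimage_liouville_approx_set[OF assms(1-3)]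
  unfolding Liouville_star_conditions_def by blast

theorem theorem5:
  fixes U :: "(real^'n) set" and f :: "nat \<Rightarrow> real^'n \<Rightarrow> real^'n"
  assumes "open U" and "U \<noteq> {}"
    and "\<And>k. k \<ge> 1 \<Longrightarrow> continuous_on U (f k)"
    and "\<And>k. k \<ge> 1 \<Longrightarrow> nowhere_constant_on (f k) U"
  shows "let S = {A \<in> U. (\<forall>k\<ge>1. f k A \<in> Liouville_star) \<and> A \<in> Liouville}
         in gdelta_in (top_of_set U) S \<and> U \<subseteq> closure S"
proof -
  define \<G> where "\<G> = Liouville_conditions \<union> (\<Union>k \<in> {1..}. (\<lambda>T. f k -` T \<inter> U) ` Liouville_star_conditions)"
  have S: "{A \<in> U. (\<forall>k\<ge>1. f k A \<in> Liouville_star) \<and> A \<in> Liouville} = U \<inter> \<Inter>\<G>"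
    by (auto simp: \<G>_def Liouville_eq_Inter_conditions Liouville_star_eq_Inter_conditions)
  have "countable \<G>"
    by (simp add: \<G>_def countable_Liouville_conditions countable_Liouville_star_conditions)
  moreover have "open T \<and> U \<subseteq> closure T" if T: "T \<in> \<G>" for T
  proof (cases "T \<in> Liouville_conditions")
    case True
    then show ?thesis
      using open_dense_Liouville_conditions by auto
  next
    case False
    obtain k T' where "k \<ge> 1" "T' \<in> Liouville_star_conditions" "T = f k -` T' \<inter> U"
      using T False by (auto simp: \<G>_def)
    then show ?thesis
      using continuous_on_open_vimage[OF assms(1)] assms(3,4) open_Liouville_star_conditions
        nowhere_constant_on_dense_preimage_Liouville_star_conditions[OF assms(1)] by blast
  qed
  ultimately show ?thesis
    unfolding Let_def S using Baire_open_subset[OF assms(1), of \<G>] by blast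
qed

end
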